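(* Let $f,g\in\mathbb{H}$ be two linearly independent pure unit quaternions (so $f^2=g^2=-1$, $f\neq\pm g$). Let $h\in L^1(\mathbb{R}^2,\mathbb{H})$ and define $h_{\pm}(\mathbf{x})=\frac12\big(h(\mathbf{x})\pm f\,h(\mathbf{x})\,g\big)$. Define $$\mathcal{F}^{f,g}_{\pm}\{h\}(\boldsymbol{\omega})=\mathcal{F}^{f,g}\{h_{\pm}\}(\boldsymbol{\omega})=\int_{\mathbb{R}^2} e^{-f x_1\omega_1}\, h_{\pm}(\mathbf{x})\, e^{-g x_2\omega_2}\, d^2\mathbf{x},\qquad \boldsymbol{\omega}=(\omega_1,\omega_2)\in\mathbb{R}^2 .$$ Then $$\mathcal{F}^{f,g}_{\pm}\{h\}(\boldsymbol{\omega})=\int_{\mathbb{R}^2} h_{\pm}(\mathbf{x})\,e^{-g(x_2\omega_2\mp x_1\omega_1)}\,d^2\mathbf{x}=\int_{\mathbb{R}^2} e^{-f(x_1\omega_1\mp x_2\omega_2)}\,h_{\pm}(\mathbf{x})\,d^2\mathbf{x},$$ and $\mathcal{F}^{f,g}\{h\}=\mathcal{F}^{f,g}_{+}\{h\}+\mathcal{F}^{f,g}_{-}\{h\}$.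
   Context: $\mathbb{H}$ is the real quaternion algebra with units $i,j,k$, $i^2=j^2=k^2=ijk=-1$. A pure quaternion has zero scalar part; a pure unit quaternion $f$ satisfies $f^2=-1$. $\mathbf{x}=(x_1,x_2)\in\mathbb{R}^2$, $d^2\mathbf{x}=dx_1dx_2$, and for a pure unit quaternion $f$ and real $\alpha$, $e^{\alpha f}=\cos\alpha+f\sin\alpha$. *)

theory Defs
  imports "HOL-Analysis.Analysis"
begin

text \<open>Real quaternions H modelled as R^4 (components 1,2,3,4 = scalar, i, j, k parts),
  with the Hamilton product.  The vector-space structure, norm and integrals are those of R^4.\<close>

type_synonym quat = "real ^ 4"

definition qmul :: "quat \<Rightarrow> quat \<Rightarrow> quat" (infixl "\<odot>" 70) where
  "p \<odot> q = vector
     [ p$1 * q$1 - p$2 * q$2 - p$3 * q$3 - p$4 * q$4,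
       p$1 * q$2 + p$2 * q$1 + p$3 * q$4 - p$4 * q$3,
       p$1 * q$3 - p$2 * q$4 + p$3 * q$1 + p$4 * q$2,
       p$1 * q$4 + p$2 * q$3 - p$3 * q$2 + p$4 * q$1 ]"

definition qone :: quat where "qone = vector [1, 0, 0, 0]"

definition pure_quat :: "quat \<Rightarrow> bool" where "pure_quat q \<longleftrightarrow> q$1 = 0"

definition pure_unit_quat :: "quat \<Rightarrow> bool" where
  "pure_unit_quat q \<longleftrightarrow> pure_quat q \<and> norm q = 1"

definition qexp :: "quat \<Rightarrow> real \<Rightarrow> quat" where
  "qexp f a = cos a *\<^sub>R qone + sin a *\<^sub>R f"

definition qft :: "quat \<Rightarrow> quat \<Rightarrow> (real \<times> real \<Rightarrow> quat) \<Rightarrow> real \<times> real \<Rightarrow> quat" where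
  "qft f g h w = integral UNIV
     (\<lambda>x. qexp f (- (fst x * fst w)) \<odot> h x \<odot> qexp g (- (snd x * snd w)))"

definition hplus :: "quat \<Rightarrow> quat \<Rightarrow> (real \<times> real \<Rightarrow> quat) \<Rightarrow> real \<times> real \<Rightarrow> quat" where
  "hplus f g h x = (1/2) *\<^sub>R (h x + f \<odot> h x \<odot> g)"

definition hminus :: "quat \<Rightarrow> quat \<Rightarrow> (real \<times> real \<Rightarrow> quat) \<Rightarrow> real \<times> real \<Rightarrow> quat" where
  "hminus f g h x = (1/2) *\<^sub>R (h x - f \<odot> h x \<odot> g)"

end

theory Submission
  imports Defs
begin

text \<open>Since \<open>f\<^sup>2 = g\<^sup>2 = -1\<close>, the map \<open>q \<mapsto> f q g\<close> is an involution, and \<open>h\<^sub>\<plusminus>\<close> are its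
  \<open>\<plusminus>1\<close>-eigenparts: \<open>f h\<^sub>\<plusminus> g = \<plusminus>h\<^sub>\<plusminus>\<close>, i.e. \<open>f h\<^sub>\<plusminus> = \<mp>h\<^sub>\<plusminus> g\<close>. Hence
  \<open>e\<^bsup>f a\<^esup> h\<^sub>\<plusminus> = h\<^sub>\<plusminus> e\<^bsup>\<mp>g a\<^esup>\<close>: the left exponential of the two-sided transform can be moved
  to the right (or the right one to the left), where the two exponentials in the same unit
  combine. The splitting of the transform is linearity of the integral, which is where
  absolute integrability of \<open>h\<close> is needed.\<close>

lemma vector_4_nth:
  "(vector [a, b, c, d] :: 'a::zero ^ 4) $ 1 = a" "(vector [a, b, c, d] :: 'a ^ 4) $ 2 = b"
  "(vector [a, b, c, d] :: 'a ^ 4) $ 3 = c" "(vector [a, b, c, d] :: 'a ^ 4) $ 4 = d"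
  unfolding vector_def by simp_all

lemma qmul_nth:
  "(p \<odot> q) $ 1 = p$1 * q$1 - p$2 * q$2 - p$3 * q$3 - p$4 * q$4"
  "(p \<odot> q) $ 2 = p$1 * q$2 + p$2 * q$1 + p$3 * q$4 - p$4 * q$3"
  "(p \<odot> q) $ 3 = p$1 * q$3 - p$2 * q$4 + p$3 * q$1 + p$4 * q$2"
  "(p \<odot> q) $ 4 = p$1 * q$4 + p$2 * q$3 - p$3 * q$2 + p$4 * q$1"
  by (simp_all add: qmul_def vector_4_nth)

lemma qone_nth: "qone $ 1 = 1" "qone $ 2 = 0" "qone $ 3 = 0" "qone $ 4 = 0"
  by (simp_all add: qone_def vector_4_nth)

lemma quat_eq_iff: "(p::quat) = q \<longleftrightarrow> p$1 = q$1 \<and> p$2 = q$2 \<and> p$3 = q$3 \<and> p$4 = q$4"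
  by (simp add: vec_eq_iff forall_4)

lemma qmul_assoc: "p \<odot> q \<odot> r = p \<odot> (q \<odot> r)"
  by (simp add: quat_eq_iff qmul_nth algebra_simps)

lemma qmul_distrib:
  "(p + q) \<odot> r = p \<odot> r + q \<odot> r" "r \<odot> (p + q) = r \<odot> p + r \<odot> q"
  "(p - q) \<odot> r = p \<odot> r - q \<odot> r" "r \<odot> (p - q) = r \<odot> p - r \<odot> q"
  "(- p) \<odot> r = - (p \<odot> r)" "r \<odot> (- p) = - (r \<odot> p)"
  "(c *\<^sub>R p) \<odot> r = c *\<^sub>R (p \<odot> r)" "r \<odot> (c *\<^sub>R p) = c *\<^sub>R (r \<odot> p)"
  by (simp_all add: quat_eq_iff qmul_nth algebra_simps)

lemma qmul_qone: "qone \<odot> r = r" "r \<odot> qone = r"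
  by (simp_all add: quat_eq_iff qmul_nth qone_nth)

lemma bilinear_qmul: "bilinear (\<odot>)"
  by (simp add: bilinear_def linear_iff qmul_distrib)

lemma bilinear_qmul_swap: "bilinear (\<lambda>q p. p \<odot> q)"
  by (simp add: bilinear_def linear_iff qmul_distrib)

lemma pure_unit_quat_square:
  assumes "pure_unit_quat f"
  shows "f \<odot> f = - qone"
proof -
  have "f \<bullet> f = 1"
    using assms by (simp add: pure_unit_quat_def dot_square_norm)
  then have norm: "f$1 * f$1 + f$2 * f$2 + f$3 * f$3 + f$4 * f$4 = 1"
    by (simp add: inner_vec_def sum_4)
  have pure: "f$1 = 0"
    using assms by (simp add: pure_unit_quat_def pure_quat_def)
  show ?thesis
    using norm pure by (simp add: quat_eq_iff qmul_nth qone_nth mult.commute)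
qed

lemma qexp_add:
  assumes "pure_unit_quat g"
  shows "qexp g a \<odot> qexp g b = qexp g (a + b)"
  using pure_unit_quat_square[OF assms]
  by (simp add: qexp_def qmul_distrib qmul_qone cos_add sin_add algebra_simps)

lemma qexp_anticommuting:
  assumes "f \<odot> p = - (p \<odot> g)"
  shows "qexp f a \<odot> p = p \<odot> qexp g (- a)"
  by (simp add: qexp_def qmul_distrib qmul_qone assms)

lemma qexp_commuting:
  assumes "f \<odot> p = p \<odot> g"
  shows "qexp f a \<odot> p = p \<odot> qexp g a"
  by (simp add: qexp_def qmul_distrib qmul_qone assms)

lemma
  assumes "pure_unit_quat f" and "pure_unit_quat g"
  shows anticommuting_hplus: "f \<odot> hplus f g h x = - (hplus f g h x \<odot> g)"
    and commuting_hminus: "f \<odot> hminus f g h x = hminus f g h x \<odot> g"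
proof -
  have "f \<odot> (f \<odot> h x \<odot> g) = - (h x \<odot> g)"
    by (simp add: qmul_assoc[symmetric] pure_unit_quat_square[OF assms(1)] qmul_distrib qmul_qone)
  moreover have "f \<odot> h x \<odot> g \<odot> g = - (f \<odot> h x)"
    by (simp add: qmul_assoc pure_unit_quat_square[OF assms(2)] qmul_distrib qmul_qone)
  ultimately show "f \<odot> hplus f g h x = - (hplus f g h x \<odot> g)"
    and "f \<odot> hminus f g h x = hminus f g h x \<odot> g"
    by (simp_all add: hplus_def hminus_def qmul_distrib algebra_simps)
qed

lemma hplus_add_hminus: "hplus f g h x + hminus f g h x = h x"
  by (simp add: hplus_def hminus_def scaleR_2[symmetric] algebra_simps)

lemma bounded_range_qexp: "bounded (range (\<lambda>x. qexp f (t x)))"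
  unfolding bounded_iff
proof (intro exI ballI)
  fix y assume "y \<in> range (\<lambda>x. qexp f (t x))"
  then obtain x where y: "y = qexp f (t x)" by auto
  have "norm y \<le> norm (cos (t x) *\<^sub>R qone) + norm (sin (t x) *\<^sub>R f)"
    unfolding y qexp_def by (rule norm_triangle_ineq)
  also have "\<dots> \<le> norm qone + norm f"
    by (intro add_mono) (simp_all add: mult_left_le_one_le)
  finally show "norm y \<le> norm qone + norm f" .
qed

lemma
  fixes u p :: "'a::euclidean_space \<Rightarrow> quat"
  assumes "continuous_on UNIV u" and "bounded (range u)"
    and "p absolutely_integrable_on UNIV"
  shows absolutely_integrable_qmul_left: "(\<lambda>x. u x \<odot> p x) absolutely_integrable_on UNIV"
    and absolutely_integrable_qmul_right: "(\<lambda>x. p x \<odot> u x) absolutely_integrable_on UNIV"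
proof -
  have "u \<in> borel_measurable (lebesgue_on UNIV)"
    using assms(1) by (intro continuous_imp_measurable_on_sets_lebesgue) auto
  from absolutely_integrable_bounded_measurable_product[OF _ this _ assms(2,3)]
  show "(\<lambda>x. u x \<odot> p x) absolutely_integrable_on UNIV"
    and "(\<lambda>x. p x \<odot> u x) absolutely_integrable_on UNIV"
    using bilinear_qmul bilinear_qmul_swap by auto
qed

lemma absolutely_integrable_qft_kernel:
  fixes p :: "real \<times> real \<Rightarrow> quat"
  assumes "p absolutely_integrable_on UNIV"
  shows "(\<lambda>x. qexp f (- (fst x * fst w)) \<odot> p x \<odot> qexp g (- (snd x * snd w)))
           absolutely_integrable_on UNIV"
  unfolding qexp_def
  by (intro absolutely_integrable_qmul_left absolutely_integrable_qmul_right assms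
      continuous_intros bounded_range_qexp[unfolded qexp_def])

lemma absolutely_integrable_sandwich:
  fixes h :: "'a::euclidean_space \<Rightarrow> quat"
  assumes "h absolutely_integrable_on UNIV"
  shows "(\<lambda>x. f \<odot> h x \<odot> g) absolutely_integrable_on UNIV"
  by (intro absolutely_integrable_qmul_left absolutely_integrable_qmul_right assms
      continuous_intros) simp_all

lemma qft_add:
  assumes "p absolutely_integrable_on UNIV" and "q absolutely_integrable_on UNIV"
  shows "qft f g (\<lambda>x. p x + q x) w = qft f g p w + qft f g q w"
  unfolding qft_def
  using absolutely_integrable_qft_kernel[OF assms(1)] absolutely_integrable_qft_kernel[OF assms(2)]
  by (simp add: integral_add[symmetric] set_lebesgue_integral_eq_integral qmul_distrib)

theorem theorem2:
  fixes f g :: quat and h :: "real \<times> real \<Rightarrow> quat" and w :: "real \<times> real"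
  assumes "pure_unit_quat f" and "pure_unit_quat g"
    and "independent {f, g}" and "f \<noteq> g"
    and "h absolutely_integrable_on UNIV"
  shows "qft f g (hplus f g h) w
           = integral UNIV (\<lambda>x. hplus f g h x \<odot> qexp g (- (snd x * snd w - fst x * fst w)))
       \<and> qft f g (hplus f g h) w
           = integral UNIV (\<lambda>x. qexp f (- (fst x * fst w - snd x * snd w)) \<odot> hplus f g h x)
       \<and> qft f g (hminus f g h) w
           = integral UNIV (\<lambda>x. hminus f g h x \<odot> qexp g (- (snd x * snd w + fst x * fst w)))
       \<and> qft f g (hminus f g h) w
           = integral UNIV (\<lambda>x. qexp f (- (fst x * fst w + snd x * snd w)) \<odot> hminus f g h x)
       \<and> qft f g h w = qft f g (hplus f g h) w + qft f g (hminus f g h) w"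
proof -
  note plus = qexp_anticommuting[OF anticommuting_hplus[OF assms(1,2)]]
  note minus = qexp_commuting[OF commuting_hminus[OF assms(1,2)]]
  note exp_add = qmul_assoc qexp_add[OF assms(2)]
  have "hplus f g h absolutely_integrable_on UNIV" "hminus f g h absolutely_integrable_on UNIV"
    unfolding hplus_def hminus_def
    by (intro absolutely_integrable_scaleR_left set_integral_add set_integral_diff(1)
        assms(5) absolutely_integrable_sandwich)+
  from qft_add[OF this, of f g w]
  have "qft f g h w = qft f g (hplus f g h) w + qft f g (hminus f g h) w"
    by (simp add: hplus_add_hminus)
  then show ?thesis
    unfolding qft_def plus minus exp_add
    by (simp add: algebra_simps)
qed

end
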